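(* Let $\mathcal{H}$ be a real Hilbert space, let $A\colon\mathcal{H}\rightrightarrows\mathcal{H}$ be maximally monotone and let $B\colon \mathcal{H}\to\mathcal{H}$ be locally Lipschitz. Let $\delta\in(0,1)$, $\sigma\in(0,1)$, $\rho\in\{1,\sigma^{-1}\}$, $\lambda_{k-1}>0$ and $x_k,x_{k-1}\in\mathcal{H}$. For $\lambda>0$ put $x_{k+1}(\lambda):=J_{\lambda A}\bigl(x_k - \lambda B(x_k) - \lambda_{k-1}(B(x_k)-B(x_{k-1}))\bigr)$. Then there exists a nonnegative integer $i$ such that, with $\lambda=\rho\lambda_{k-1}\sigma^i$, $$\lambda\|B(x_{k+1}(\lambda))-B(x_k)\|\leq\frac{\delta}{2}\|x_{k+1}(\lambda)-x_k\|.$$ In particular, the linesearch procedure (choosing the smallest such $i$ at each iteration, starting from $\lambda_{-1}>0$ and $x_0,x_{-1}\in\mathcal{H}$) always terminates, so the stepsize sequence $(\lambda_k)$ is well defined.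
   Context: $J_{\lambda A}:=(I+\lambda A)^{-1}$ denotes the resolvent. *)

theory Defs
  imports "HOL-Analysis.Analysis"
begin

definition monotone_op :: "('a::real_inner \<Rightarrow> 'a set) \<Rightarrow> bool" where
  "monotone_op A \<longleftrightarrow>
     (\<forall>x y u v. u \<in> A x \<longrightarrow> v \<in> A y \<longrightarrow> inner (x - y) (u - v) \<ge> 0)"

definition maximally_monotone :: "('a::real_inner \<Rightarrow> 'a set) \<Rightarrow> bool" where
  "maximally_monotone A \<longleftrightarrow> monotone_op A \<and>
     (\<forall>A'. monotone_op A' \<and> (\<forall>x. A x \<subseteq> A' x) \<longrightarrow> A' = A)"

text \<open>Resolvent J_{lam A} = (I + lam A)^{-1}: the point p with z \<in> p + lam A p
  (single-valued and everywhere defined for maximally monotone A and lam > 0).\<close>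
definition resolvent :: "real \<Rightarrow> ('a::real_inner \<Rightarrow> 'a set) \<Rightarrow> 'a \<Rightarrow> 'a" where
  "resolvent lam A z = (THE p. \<exists>u \<in> A p. z = p + lam *\<^sub>R u)"

definition locally_lipschitz :: "('a::metric_space \<Rightarrow> 'b::metric_space) \<Rightarrow> bool" where
  "locally_lipschitz B \<longleftrightarrow>
     (\<forall>x. \<exists>e>0. \<exists>L. \<forall>y\<in>ball x e. \<forall>z\<in>ball x e. dist (B y) (B z) \<le> L * dist y z)"

end

theory Submission
  imports Defs
begin

text \<open>
  For a monotone operator the resolvent points z = p + lam u, u \<in> A p, move monotonically with
  the step size: if mu \<le> lam then
  |J_lam z - J_mu z|^2 \<le> |z - J_lam z|^2 - |z - J_mu z|^2.
  The trial points x_{k+1}(lam) are resolvents of the shifted operator A + B x_k at the fixed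
  point z = x_k - lam_{k-1} (B x_k - B x_{k-1}), so along the step sizes
  lam_i = rho lam_{k-1} sigma^i, which decrease to 0, they form a Cauchy sequence with a limit p.
  If p \<noteq> x_k, the left-hand side lam_i |B x_{k+1}(lam_i) - B x_k| tends to 0 while the
  right-hand side tends to (delta/2) |p - x_k| > 0; if p = x_k, the trial points eventually lie in
  a ball on which B is L-Lipschitz, and then lam_i L \<le> delta/2 suffices.

  That the resolvent is defined at all is Minty's theorem, proved with the Fitzpatrick function F
  of the graph: F(x, u) \<ge> \<langle>x, u\<rangle> with equality on the graph, so F + |.|^2/2 is bounded
  below by |x + u|^2/2 \<ge> 0; by uniform convexity its minimizing sequences converge, and the
  first-order condition at the minimizer produces a graph point (x, u) with x + u = 0.
\<close>

section \<open>Monotone operators and their resolvents\<close>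

lemma monotone_opD:
  "monotone_op A \<Longrightarrow> u \<in> A x \<Longrightarrow> v \<in> A y \<Longrightarrow> 0 \<le> inner (x - y) (u - v)"
  by (simp add: monotone_op_def)

lemma maximally_monotone_imp_monotone_op: "maximally_monotone A \<Longrightarrow> monotone_op A"
  by (simp add: maximally_monotone_def)

lemma monotone_op_shift: "monotone_op A \<Longrightarrow> monotone_op (\<lambda>x. (\<lambda>u. u + b) ` A x)"
  by (auto simp: monotone_op_def)

lemma maximally_monotone_memI:
  assumes max: "maximally_monotone A"
    and related: "\<And>y v. v \<in> A y \<Longrightarrow> 0 \<le> inner (x - y) (w - v)"
  shows "w \<in> A x"
proof -
  define A' where "A' y = (if y = x then insert w (A x) else A y)" for y
  have mem: "u \<in> A' y \<longleftrightarrow> (y = x \<and> u = w) \<or> u \<in> A y" for y u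
    by (auto simp: A'_def)
  have related': "0 \<le> inner (y - x) (v - w)" if "v \<in> A y" for y v
    using related[OF that] by (simp add: inner_diff_left inner_diff_right)
  have "monotone_op A'"
    unfolding monotone_op_def mem
    using monotone_opD[OF maximally_monotone_imp_monotone_op[OF max]] related related' by auto
  moreover have "A x \<subseteq> A' x" for x
    by (auto simp: A'_def)
  ultimately have "A' = A"
    using max by (auto simp: maximally_monotone_def)
  then show ?thesis
    using mem[of w x] by simp
qed

lemma resolvent_dist_le:
  fixes A :: "'a::real_inner \<Rightarrow> 'a set"
  assumes mono: "monotone_op A"
    and u: "u \<in> A p" "z = p + lam *\<^sub>R u"
    and v: "v \<in> A q" "z = q + mu *\<^sub>R v"
    and "0 < mu" "mu \<le> lam"
  shows "norm (p - q)^2 \<le> norm (z - p)^2 - norm (z - q)^2"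
proof -
  define w w' where "w = z - p" and "w' = z - q"
  have "w = lam *\<^sub>R u"
    unfolding w_def u(2) by simp
  moreover have "w' = mu *\<^sub>R v"
    unfolding w'_def v(2) by simp
  ultimately have "mu *\<^sub>R w - lam *\<^sub>R w' = (lam * mu) *\<^sub>R (u - v)"
    by (simp add: algebra_simps)
  moreover have "p - q = w' - w"
    unfolding w_def w'_def by simp
  ultimately have "inner (w' - w) (mu *\<^sub>R w - lam *\<^sub>R w') = (lam * mu) * inner (p - q) (u - v)"
    by simp
  moreover have "0 \<le> inner (p - q) (u - v)"
    using monotone_opD[OF mono u(1) v(1)] .
  ultimately have "0 \<le> inner (w' - w) (mu *\<^sub>R w - lam *\<^sub>R w')"
    using \<open>0 < mu\<close> \<open>mu \<le> lam\<close> by simp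
  also have "inner (w' - w) (mu *\<^sub>R w - lam *\<^sub>R w')
      = (lam - mu) * inner w' (w - w') - mu * norm (w - w')^2"
    by (simp add: power2_norm_eq_inner algebra_simps inner_commute)
  finally have key: "mu * norm (w - w')^2 \<le> (lam - mu) * inner w' (w - w')"
    by simp
  have "0 \<le> inner w' (w - w')"
  proof (cases "mu = lam")
    case True
    then have "mu * norm (w - w')^2 \<le> 0"
      using key by simp
    then have "w = w'"
      using \<open>0 < mu\<close> by (simp add: mult_le_0_iff)
    then show ?thesis by simp
  next
    case False
    have "0 \<le> mu * norm (w - w')^2"
      using \<open>0 < mu\<close> by simp
    then have "0 \<le> (lam - mu) * inner w' (w - w')"
      using key by linarith
    then show ?thesis
      using False \<open>mu \<le> lam\<close> by (simp add: zero_le_mult_iff)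
  qed
  then have "norm (w' - w)^2 \<le> norm w^2 - norm w'^2"
    by (simp add: power2_norm_eq_inner algebra_simps inner_commute)
  then show ?thesis
    unfolding \<open>p - q = w' - w\<close> w_def w'_def .
qed

lemma monotone_resolvent_unique:
  assumes "monotone_op A" "0 < lam"
    and "u \<in> A p" "z = p + lam *\<^sub>R u"
    and "v \<in> A q" "z = q + lam *\<^sub>R v"
  shows "p = q"
proof -
  have "norm (p - q)^2 \<le> norm (z - p)^2 - norm (z - q)^2"
    using resolvent_dist_le[OF assms(1,3,4,5,6,2)] by simp
  moreover have "norm (q - p)^2 \<le> norm (z - q)^2 - norm (z - p)^2"
    using resolvent_dist_le[OF assms(1,5,6,3,4,2)] by simp
  moreover have "norm (q - p)^2 = norm (p - q)^2"
    by (simp add: norm_minus_commute)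
  ultimately have "norm (p - q)^2 \<le> 0"
    by linarith
  then show ?thesis
    by simp
qed

section \<open>Minty's theorem\<close>

lemma le_if_le_add_mult_small:
  fixes x y c :: real
  assumes "\<And>t. 0 < t \<Longrightarrow> t \<le> 1 \<Longrightarrow> x \<le> y + t * c"
  shows "x \<le> y"
proof (rule field_le_epsilon)
  fix e :: real
  assume "0 < e"
  define t where "t = min 1 (e / (\<bar>c\<bar> + 1))"
  have t: "0 < t" "t \<le> 1"
    unfolding t_def using \<open>0 < e\<close> by auto
  have "t * c \<le> t * (\<bar>c\<bar> + 1)"
    using t by (intro mult_left_mono) auto
  also have "\<dots> \<le> e"
    unfolding t_def by (simp add: min_mult_distrib_right pos_divide_le_eq min.coboundedI2)
  finally show "x \<le> y + e"
    using assms[OF t] by linarith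
qed

lemma minimizing_sequence_Cauchy:
  fixes P :: "nat \<Rightarrow> 'a::real_normed_vector" and H :: "'a \<Rightarrow> real"
  assumes dist: "\<And>n k. norm (P n - P k)^2 \<le> 4 * (H (P n) + H (P k) - 2 * m)"
    and lim: "(\<lambda>n. H (P n)) \<longlonglongrightarrow> m"
  shows "Cauchy P"
proof (rule metric_CauchyI)
  fix e :: real
  assume "0 < e"
  then obtain M where M: "\<And>n. M \<le> n \<Longrightarrow> \<bar>H (P n) - m\<bar> < e^2 / 8"
    using lim[unfolded LIMSEQ_def] by (metis dist_real_def zero_less_divide_iff zero_less_numeral zero_less_power)
  have "norm (P n - P k) < e" if "M \<le> n" "M \<le> k" for n k
  proof -
    have "H (P n) < m + e^2 / 8"
      using M[OF \<open>M \<le> n\<close>] abs_ge_self[of "H (P n) - m"] by linarith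
    moreover have "H (P k) < m + e^2 / 8"
      using M[OF \<open>M \<le> k\<close>] abs_ge_self[of "H (P k) - m"] by linarith
    ultimately have "norm (P n - P k)^2 < e^2"
      using dist[of n k] by argo
    then show ?thesis
      using \<open>0 < e\<close> by (simp add: power_less_imp_less_base)
  qed
  then show "\<exists>M. \<forall>n\<ge>M. \<forall>k\<ge>M. dist (P n) (P k) < e"
    by (intro exI[of _ M]) (simp add: dist_norm)
qed

lemma minimizing_sequence_exists:
  fixes f :: "'a \<Rightarrow> real"
  assumes "S \<noteq> {}" and "bdd_below (f ` S)"
  obtains P where "\<And>n. P n \<in> S" and "(\<lambda>n. f (P n)) \<longlonglongrightarrow> Inf (f ` S)"
proof -
  have "Inf (f ` S) \<in> closure (f ` S)"
    using assms by (intro closure_contains_Inf) auto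
  then obtain y where y: "\<forall>n. y n \<in> f ` S" and "y \<longlonglongrightarrow> Inf (f ` S)"
    unfolding closure_sequential by blast
  from y have "\<forall>n. \<exists>p. p \<in> S \<and> y n = f p"
    unfolding image_iff by blast
  from choice[OF this] obtain P where P: "\<forall>n. P n \<in> S \<and> y n = f (P n)"
    by blast
  then have "y = (\<lambda>n. f (P n))"
    by auto
  show thesis
  proof (rule that)
    show "P n \<in> S" for n
      using P by blast
    show "(\<lambda>n. f (P n)) \<longlonglongrightarrow> Inf (f ` S)"
      using \<open>y \<longlonglongrightarrow> Inf (f ` S)\<close> \<open>y = (\<lambda>n. f (P n))\<close> by simp
  qed
qed

locale maximal_monotone_graph =
  fixes G :: "('a::{real_inner, complete_space} \<times> 'a) set"
  assumes monotone: "(a, v) \<in> G \<Longrightarrow> (b, w) \<in> G \<Longrightarrow> 0 \<le> inner (a - b) (v - w)"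
    and maximal: "(\<And>a v. (a, v) \<in> G \<Longrightarrow> 0 \<le> inner (x - a) (u - v)) \<Longrightarrow> (x, u) \<in> G"
begin

definition fitzpatrick_term :: "'a \<times> 'a \<Rightarrow> 'a \<times> 'a \<Rightarrow> real" where
  "fitzpatrick_term g p = inner (fst p) (snd g) + inner (fst g) (snd p) - inner (fst g) (snd g)"

text \<open>Outside fitzpatrick_dom the supremum below is unbounded, so fitzpatrick is a junk value there.\<close>

definition fitzpatrick_dom :: "('a \<times> 'a) set" where
  "fitzpatrick_dom = {p. bdd_above ((\<lambda>g. fitzpatrick_term g p) ` G)}"

definition fitzpatrick :: "'a \<times> 'a \<Rightarrow> real" where
  "fitzpatrick p = (SUP g\<in>G. fitzpatrick_term g p)"

definition fitzpatrick_reg :: "'a \<times> 'a \<Rightarrow> real" where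
  "fitzpatrick_reg p = fitzpatrick p + norm p ^ 2 / 2"

lemma graph_nonempty: "G \<noteq> {}"
  using maximal[of 0 0] by auto

lemma fitzpatrick_term_Pair: "fitzpatrick_term (a, v) (x, u) = inner x u - inner (x - a) (u - v)"
  by (simp add: fitzpatrick_term_def inner_diff_left inner_diff_right inner_commute)

lemma fitzpatrick_term_affine:
  "fitzpatrick_term g (p + t *\<^sub>R (q - p))
    = fitzpatrick_term g p + t * (fitzpatrick_term g q - fitzpatrick_term g p)"
  by (simp add: fitzpatrick_term_def algebra_simps)

lemma fitzpatrick_upper:
  "p \<in> fitzpatrick_dom \<Longrightarrow> g \<in> G \<Longrightarrow> fitzpatrick_term g p \<le> fitzpatrick p"
  unfolding fitzpatrick_def fitzpatrick_dom_def by (auto intro: cSUP_upper)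

lemma fitzpatrick_least:
  assumes "\<And>g. g \<in> G \<Longrightarrow> fitzpatrick_term g p \<le> M"
  shows fitzpatrick_dom_memI: "p \<in> fitzpatrick_dom" and fitzpatrick_le: "fitzpatrick p \<le> M"
proof -
  show "p \<in> fitzpatrick_dom"
    unfolding fitzpatrick_dom_def by (rule CollectI, rule bdd_aboveI2, rule assms)
  show "fitzpatrick p \<le> M"
    unfolding fitzpatrick_def using graph_nonempty assms by (rule cSUP_least)
qed

lemma fitzpatrick_graph:
  assumes "(x, u) \<in> G"
  shows "(x, u) \<in> fitzpatrick_dom" and "fitzpatrick (x, u) = inner x u"
proof -
  have le: "fitzpatrick_term g (x, u) \<le> inner x u" if "g \<in> G" for g
    using monotone[OF assms] that by (cases g) (simp add: fitzpatrick_term_Pair)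
  then show dom: "(x, u) \<in> fitzpatrick_dom"
    by (rule fitzpatrick_dom_memI)
  have "fitzpatrick_term (x, u) (x, u) \<le> fitzpatrick (x, u)"
    using fitzpatrick_upper[OF dom assms] .
  then show "fitzpatrick (x, u) = inner x u"
    using fitzpatrick_le[OF le] by (simp add: fitzpatrick_term_Pair)
qed

lemma inner_le_fitzpatrick:
  assumes "(x, u) \<in> fitzpatrick_dom"
  shows "inner x u \<le> fitzpatrick (x, u)"
proof (rule ccontr)
  assume less: "\<not> inner x u \<le> fitzpatrick (x, u)"
  have "(x, u) \<in> G"
  proof (rule maximal)
    fix a v
    assume "(a, v) \<in> G"
    then show "0 \<le> inner (x - a) (u - v)"
      using fitzpatrick_upper[OF assms] less by (fastforce simp: fitzpatrick_term_Pair)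
  qed
  then show False
    using fitzpatrick_graph less by simp
qed

lemma fitzpatrick_reg_nonneg:
  assumes "p \<in> fitzpatrick_dom"
  shows "0 \<le> fitzpatrick_reg p"
proof (cases p)
  case (Pair x u)
  have "0 \<le> norm (x + u)^2 / 2"
    by simp
  also have "\<dots> = inner x u + norm (x, u)^2 / 2"
    by (simp add: power2_norm_eq_inner inner_add_left inner_add_right inner_commute field_simps)
  also have "\<dots> \<le> fitzpatrick (x, u) + norm (x, u)^2 / 2"
    using inner_le_fitzpatrick assms Pair by simp
  finally show ?thesis
    using Pair by (simp add: fitzpatrick_reg_def)
qed

lemma fitzpatrick_convex:
  assumes "p \<in> fitzpatrick_dom" "q \<in> fitzpatrick_dom" "0 \<le> t" "t \<le> 1"
  shows "p + t *\<^sub>R (q - p) \<in> fitzpatrick_dom" (is "?r \<in> _")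
    and "fitzpatrick (p + t *\<^sub>R (q - p)) \<le> fitzpatrick p + t * (fitzpatrick q - fitzpatrick p)"
proof -
  have "fitzpatrick_term g ?r \<le> fitzpatrick p + t * (fitzpatrick q - fitzpatrick p)" if "g \<in> G" for g
  proof -
    have "(1 - t) * fitzpatrick_term g p + t * fitzpatrick_term g q
        \<le> (1 - t) * fitzpatrick p + t * fitzpatrick q"
      using fitzpatrick_upper assms that by (intro add_mono mult_left_mono) auto
    then show ?thesis
      unfolding fitzpatrick_term_affine by (simp add: algebra_simps)
  qed
  then show "?r \<in> fitzpatrick_dom" and "fitzpatrick ?r \<le> fitzpatrick p + t * (fitzpatrick q - fitzpatrick p)"
    by (fact fitzpatrick_dom_memI fitzpatrick_le)+
qed

lemma fitzpatrick_reg_midpoint: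
  assumes "p \<in> fitzpatrick_dom" "q \<in> fitzpatrick_dom"
  shows "p + (1/2) *\<^sub>R (q - p) \<in> fitzpatrick_dom"
    and "fitzpatrick_reg (p + (1/2) *\<^sub>R (q - p))
      \<le> (fitzpatrick_reg p + fitzpatrick_reg q) / 2 - norm (p - q)^2 / 8"
proof -
  have "norm (p + (1/2) *\<^sub>R (q - p))^2 = norm p^2 / 2 + norm q^2 / 2 - norm (p - q)^2 / 4"
    by (simp add: power2_norm_eq_inner inner_add_left inner_add_right inner_diff_left
        inner_diff_right inner_commute field_simps)
  then show "fitzpatrick_reg (p + (1/2) *\<^sub>R (q - p))
      \<le> (fitzpatrick_reg p + fitzpatrick_reg q) / 2 - norm (p - q)^2 / 8"
    using fitzpatrick_convex(2)[OF assms, of "1/2"] unfolding fitzpatrick_reg_def by simp argo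
  show "p + (1/2) *\<^sub>R (q - p) \<in> fitzpatrick_dom"
    using fitzpatrick_convex(1)[OF assms] by simp
qed

lemma fitzpatrick_reg_lower_semicontinuous:
  assumes P: "\<And>n. P n \<in> fitzpatrick_dom" and "P \<longlonglongrightarrow> p0"
    and lim: "(\<lambda>n. fitzpatrick_reg (P n)) \<longlonglongrightarrow> m"
  shows "p0 \<in> fitzpatrick_dom" and "fitzpatrick_reg p0 \<le> m"
proof -
  have bound: "fitzpatrick_term g p0 \<le> m - norm p0^2 / 2" if "g \<in> G" for g
  proof -
    have "(\<lambda>n. fitzpatrick_term g (P n) + norm (P n)^2 / 2)
        \<longlonglongrightarrow> fitzpatrick_term g p0 + norm p0^2 / 2"
      unfolding fitzpatrick_term_def by (intro tendsto_intros \<open>P \<longlonglongrightarrow> p0\<close>) simp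
    moreover have "fitzpatrick_term g (P n) + norm (P n)^2 / 2 \<le> fitzpatrick_reg (P n)" for n
      using fitzpatrick_upper[OF P that] by (simp add: fitzpatrick_reg_def)
    ultimately have "fitzpatrick_term g p0 + norm p0^2 / 2 \<le> m"
      using lim by (intro LIMSEQ_le) auto
    then show ?thesis by simp
  qed
  show "p0 \<in> fitzpatrick_dom"
    using bound by (rule fitzpatrick_dom_memI)
  show "fitzpatrick_reg p0 \<le> m"
    using fitzpatrick_le[OF bound] by (simp add: fitzpatrick_reg_def)
qed

lemma fitzpatrick_reg_has_minimizer:
  obtains p0 where "p0 \<in> fitzpatrick_dom"
    and "\<And>q. q \<in> fitzpatrick_dom \<Longrightarrow> fitzpatrick_reg p0 \<le> fitzpatrick_reg q"
proof -
  define m where "m = Inf (fitzpatrick_reg ` fitzpatrick_dom)"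
  obtain g where "g \<in> G"
    using graph_nonempty by blast
  then have dom_nonempty: "fitzpatrick_dom \<noteq> {}"
    using fitzpatrick_graph(1) by (cases g) blast
  have bdd: "bdd_below (fitzpatrick_reg ` fitzpatrick_dom)"
    using fitzpatrick_reg_nonneg by (intro bdd_belowI2)
  have m_le: "m \<le> fitzpatrick_reg q" if "q \<in> fitzpatrick_dom" for q
    unfolding m_def using bdd that by (simp add: cInf_lower)
  obtain P where P: "\<And>n. P n \<in> fitzpatrick_dom"
    and lim: "(\<lambda>n. fitzpatrick_reg (P n)) \<longlonglongrightarrow> m"
    using minimizing_sequence_exists[OF dom_nonempty bdd, folded m_def] by blast
  have "Cauchy P"
  proof (rule minimizing_sequence_Cauchy[where H = fitzpatrick_reg, OF _ lim])
    fix n k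
    have "m \<le> fitzpatrick_reg (P n + (1/2) *\<^sub>R (P k - P n))"
      using m_le fitzpatrick_reg_midpoint(1)[OF P P] by blast
    then show "norm (P n - P k)^2 \<le> 4 * (fitzpatrick_reg (P n) + fitzpatrick_reg (P k) - 2 * m)"
      using fitzpatrick_reg_midpoint(2)[OF P P, of n k] by argo
  qed
  then obtain p0 where "P \<longlonglongrightarrow> p0"
    using Cauchy_convergent_iff convergent_def by blast
  note p0 = fitzpatrick_reg_lower_semicontinuous[OF P \<open>P \<longlonglongrightarrow> p0\<close> lim]
  show thesis
  proof (rule that)
    show "p0 \<in> fitzpatrick_dom"
      using p0(1) .
    show "fitzpatrick_reg p0 \<le> fitzpatrick_reg q" if "q \<in> fitzpatrick_dom" for q
      using p0(2) m_le[OF that] by linarith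
  qed
qed

lemma minimizer_variational_inequality:
  assumes p0: "p0 \<in> fitzpatrick_dom"
    and min: "\<And>q. q \<in> fitzpatrick_dom \<Longrightarrow> fitzpatrick_reg p0 \<le> fitzpatrick_reg q"
    and q: "q \<in> fitzpatrick_dom"
  shows "fitzpatrick p0 \<le> fitzpatrick q + inner p0 (q - p0)"
proof (rule le_if_le_add_mult_small)
  fix t :: real
  assume t: "0 < t" "t \<le> 1"
  define d where "d = q - p0"
  have "norm (p0 + t *\<^sub>R d)^2 = norm p0^2 + 2 * (t * inner p0 d) + t * (t * norm d^2)"
    by (simp add: power2_norm_eq_inner inner_commute algebra_simps)
  moreover have "fitzpatrick_reg p0 \<le> fitzpatrick_reg (p0 + t *\<^sub>R d)"
    unfolding d_def using min fitzpatrick_convex(1)[OF p0 q] t by simp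
  moreover have "fitzpatrick (p0 + t *\<^sub>R d) \<le> fitzpatrick p0 + (t * fitzpatrick q - t * fitzpatrick p0)"
    unfolding d_def using fitzpatrick_convex(2)[OF p0 q] t by (simp add: right_diff_distrib)
  ultimately have "t * fitzpatrick p0 \<le> t * fitzpatrick q + t * inner p0 d + t * (t * (norm d^2 / 2))"
    unfolding fitzpatrick_reg_def by linarith
  then have "t * fitzpatrick p0 \<le> t * (fitzpatrick q + inner p0 d + t * (norm d^2 / 2))"
    by (simp add: distrib_left)
  then show "fitzpatrick p0 \<le> fitzpatrick q + inner p0 (q - p0) + t * (norm d^2 / 2)"
    using t unfolding d_def by (simp add: mult_le_cancel_left_pos)
qed

lemma graph_meets_antidiagonal: "\<exists>x u. (x, u) \<in> G \<and> x + u = 0"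
proof -
  obtain p0 where p0: "p0 \<in> fitzpatrick_dom"
    and min: "\<And>q. q \<in> fitzpatrick_dom \<Longrightarrow> fitzpatrick_reg p0 \<le> fitzpatrick_reg q"
    using fitzpatrick_reg_has_minimizer by blast
  obtain x0 u0 where p0_eq: "p0 = (x0, u0)"
    by fastforce
  have var: "fitzpatrick p0 \<le> inner a v + inner x0 a - inner x0 x0 + inner u0 v - inner u0 u0"
    if "(a, v) \<in> G" for a v
    using minimizer_variational_inequality[OF p0 min fitzpatrick_graph(1)[OF that]]
      fitzpatrick_graph(2)[OF that] p0_eq by (simp add: inner_diff_right)
  have lower: "inner x0 u0 \<le> fitzpatrick p0"
    using inner_le_fitzpatrick p0 p0_eq by simp
  have sq: "inner (x0 + u0) (x0 + u0) = inner x0 x0 + 2 * inner x0 u0 + inner u0 u0"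
    by (simp add: inner_add_left inner_add_right inner_commute)
  have "(- u0, - x0) \<in> G"
  proof (rule maximal)
    fix a v
    assume "(a, v) \<in> G"
    have "inner (- u0 - a) (- x0 - v) = inner x0 u0 + inner u0 v + inner x0 a + inner a v"
      by (simp add: inner_diff_left inner_diff_right inner_commute)
    then show "0 \<le> inner (- u0 - a) (- x0 - v)"
      using var[OF \<open>(a, v) \<in> G\<close>] lower sq inner_ge_zero[of "x0 + u0"] by linarith
  qed
  then have "inner (x0 + u0) (x0 + u0) \<le> 0"
    using var[of "- u0" "- x0"] lower sq by simp
  then have "inner (x0 + u0) (x0 + u0) = 0"
    using inner_ge_zero[of "x0 + u0"] by linarith
  then have "x0 + u0 = 0"
    using inner_eq_zero_iff by blast
  moreover have "(- u0, - x0) = (x0, u0)"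
    using calculation add_eq_0_iff[of x0 u0] add_eq_0_iff2[of x0 u0] by simp
  ultimately show ?thesis
    using \<open>(- u0, - x0) \<in> G\<close> by (intro exI[of _ x0] exI[of _ u0]) simp
qed

end

lemma maximally_monotone_resolvent_exists:
  fixes A :: "'a::{real_inner, complete_space} \<Rightarrow> 'a set"
  assumes max: "maximally_monotone A" and "0 < lam"
  shows "\<exists>p. \<exists>u\<in>A p. z = p + lam *\<^sub>R u"
proof -
  \<comment> \<open>G is the graph of lam A - z, so its points with x + u = 0 solve z \<in> x + lam A x.\<close>
  define G where "G = {(a, w). (1 / lam) *\<^sub>R (w + z) \<in> A a}"
  have mem_G: "(a, w) \<in> G \<longleftrightarrow> (1 / lam) *\<^sub>R (w + z) \<in> A a" for a w
    by (simp add: G_def)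
  interpret maximal_monotone_graph G
  proof
    fix a v b w
    assume "(a, v) \<in> G" "(b, w) \<in> G"
    then have "0 \<le> inner (a - b) ((1 / lam) *\<^sub>R (v + z) - (1 / lam) *\<^sub>R (w + z))"
      unfolding mem_G by (rule monotone_opD[OF maximally_monotone_imp_monotone_op[OF max]])
    also have "(1 / lam) *\<^sub>R (v + z) - (1 / lam) *\<^sub>R (w + z) = (1 / lam) *\<^sub>R (v - w)"
      by (simp add: algebra_simps)
    finally show "0 \<le> inner (a - b) (v - w)"
      using \<open>0 < lam\<close> by (simp add: zero_le_divide_iff)
  next
    fix x u
    assume related: "\<And>a v. (a, v) \<in> G \<Longrightarrow> 0 \<le> inner (x - a) (u - v)"
    show "(x, u) \<in> G"
      unfolding mem_G
    proof (rule maximally_monotone_memI[OF max])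
      fix y v
      assume "v \<in> A y"
      then have "(y, lam *\<^sub>R v - z) \<in> G"
        using \<open>0 < lam\<close> by (simp add: mem_G)
      then have "0 \<le> inner (x - y) (u - (lam *\<^sub>R v - z))"
        by (rule related)
      moreover have "u - (lam *\<^sub>R v - z) = lam *\<^sub>R ((1 / lam) *\<^sub>R (u + z) - v)"
        using \<open>0 < lam\<close> by (simp add: algebra_simps)
      ultimately show "0 \<le> inner (x - y) ((1 / lam) *\<^sub>R (u + z) - v)"
        using \<open>0 < lam\<close> by (simp add: zero_le_mult_iff)
    qed
  qed
  obtain x u where "(x, u) \<in> G" "x + u = 0"
    using graph_meets_antidiagonal by blast
  then have "(1 / lam) *\<^sub>R (u + z) \<in> A x" "z = x + lam *\<^sub>R ((1 / lam) *\<^sub>R (u + z))"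
    using \<open>0 < lam\<close> by (simp_all add: mem_G add.assoc[symmetric])
  then show ?thesis
    by blast
qed

lemma maximally_monotone_resolvent:
  fixes A :: "'a::{real_inner, complete_space} \<Rightarrow> 'a set"
  assumes max: "maximally_monotone A" and "0 < lam"
  shows "\<exists>u\<in>A (resolvent lam A z). z = resolvent lam A z + lam *\<^sub>R u"
proof -
  obtain p u where u: "u \<in> A p" "z = p + lam *\<^sub>R u"
    using maximally_monotone_resolvent_exists[OF assms] by blast
  have "\<exists>!p. \<exists>u\<in>A p. z = p + lam *\<^sub>R u"
  proof (rule ex1I)
    show "\<exists>u\<in>A p. z = p + lam *\<^sub>R u"
      using u by blast
    fix q
    assume "\<exists>v\<in>A q. z = q + lam *\<^sub>R v"
    then obtain v where "v \<in> A q" "z = q + lam *\<^sub>R v"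
      by blast
    then show "q = p"
      using monotone_resolvent_unique[OF maximally_monotone_imp_monotone_op[OF max] \<open>0 < lam\<close>] u
      by blast
  qed
  then show ?thesis
    unfolding resolvent_def by (rule theI')
qed

section \<open>Termination of the linesearch\<close>

lemma Cauchy_if_dist_sq_le_decrement:
  fixes p :: "nat \<Rightarrow> 'a::real_normed_vector" and N :: "nat \<Rightarrow> real"
  assumes dist: "\<And>i j. i \<le> j \<Longrightarrow> norm (p i - p j)^2 \<le> N i - N j"
    and nonneg: "\<And>i. 0 \<le> N i"
  shows "Cauchy p"
proof (rule metric_CauchyI)
  have "decseq N"
  proof (rule decseq_SucI)
    fix n
    show "N (Suc n) \<le> N n"
      using dist[of n "Suc n"] zero_le_power2[of "norm (p n - p (Suc n))"] by linarith
  qed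
  then obtain L where "N \<longlonglongrightarrow> L"
    using nonneg decseq_convergent by blast
  then have "Cauchy N"
    using convergent_Cauchy convergent_def by blast
  fix e :: real
  assume "0 < e"
  then obtain M where M: "\<And>m n. M \<le> m \<Longrightarrow> M \<le> n \<Longrightarrow> dist (N m) (N n) < e^2"
    using \<open>Cauchy N\<close> unfolding Cauchy_def by (meson zero_less_power)
  have "norm (p m - p n) < e" if "M \<le> m" "m \<le> n" for m n
  proof -
    have "norm (p m - p n)^2 < e^2"
      using dist[OF \<open>m \<le> n\<close>] M[of m n] that by (simp add: dist_real_def)
    then show ?thesis
      using \<open>0 < e\<close> by (simp add: power_less_imp_less_base)
  qed
  then show "\<exists>M. \<forall>m\<ge>M. \<forall>n\<ge>M. dist (p m) (p n) < e"
    by (metis dist_commute dist_norm nat_le_linear)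
qed

lemma maximally_monotone_resolvent_path_convergent:
  fixes A :: "'a::{real_inner, complete_space} \<Rightarrow> 'a set"
  assumes max: "maximally_monotone A" and "decseq lam" and lam_pos: "\<And>i. 0 < lam i"
  shows "convergent (\<lambda>i. resolvent (lam i) A (z - lam i *\<^sub>R b))"
proof -
  define P where "P i = resolvent (lam i) A (z - lam i *\<^sub>R b)" for i
  have "\<forall>i. \<exists>u. u \<in> (\<lambda>u. u + b) ` A (P i) \<and> z = P i + lam i *\<^sub>R u"
  proof
    fix i
    obtain u where u: "u \<in> A (P i)" and eq: "z - lam i *\<^sub>R b = P i + lam i *\<^sub>R u"
      using maximally_monotone_resolvent[OF max lam_pos[of i], where z = "z - lam i *\<^sub>R b",
          folded P_def]
      by blast
    have "z = (z - lam i *\<^sub>R b) + lam i *\<^sub>R b"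
      by simp
    also have "\<dots> = P i + lam i *\<^sub>R (u + b)"
      unfolding eq by (simp add: scaleR_add_right add.assoc)
    finally show "\<exists>u. u \<in> (\<lambda>u. u + b) ` A (P i) \<and> z = P i + lam i *\<^sub>R u"
      using u by blast
  qed
  from choice[OF this] obtain U
    where "\<forall>i. U i \<in> (\<lambda>u. u + b) ` A (P i) \<and> z = P i + lam i *\<^sub>R U i"
    by blast
  then have U: "\<And>i. U i \<in> (\<lambda>u. u + b) ` A (P i)" "\<And>i. z = P i + lam i *\<^sub>R U i"
    by auto
  have mono: "monotone_op (\<lambda>x. (\<lambda>u. u + b) ` A x)"
    using monotone_op_shift[OF maximally_monotone_imp_monotone_op[OF max]] .
  have "Cauchy P"
  proof (rule Cauchy_if_dist_sq_le_decrement)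
    fix i j :: nat
    assume "i \<le> j"
    then have "lam j \<le> lam i"
      using \<open>decseq lam\<close> by (simp add: decseq_def)
    then show "norm (P i - P j)^2 \<le> norm (z - P i)^2 - norm (z - P j)^2"
      using resolvent_dist_le[OF mono U U lam_pos] by blast
  qed simp
  then show ?thesis
    unfolding P_def[abs_def] by (simp add: Cauchy_convergent_iff)
qed

lemma locally_lipschitzE:
  assumes "locally_lipschitz B"
  obtains e L where "0 < e" and "L-lipschitz_on (ball x e) B"
proof -
  obtain e L where "0 < e"
    and L: "\<forall>y\<in>ball x e. \<forall>z\<in>ball x e. dist (B y) (B z) \<le> L * dist y z"
    using assms unfolding locally_lipschitz_def by blast
  have "(max L 0)-lipschitz_on (ball x e) B"
  proof (rule lipschitz_onI)
    fix y z
    assume "y \<in> ball x e" "z \<in> ball x e"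
    then have "dist (B y) (B z) \<le> L * dist y z"
      using L by blast
    also have "\<dots> \<le> max L 0 * dist y z"
      by (intro mult_right_mono) auto
    finally show "dist (B y) (B z) \<le> max L 0 * dist y z" .
  qed simp
  with \<open>0 < e\<close> show thesis
    by (rule that)
qed

lemma locally_lipschitz_isCont:
  assumes "locally_lipschitz B"
  shows "isCont B x"
proof -
  obtain e L where "0 < e" and L: "L-lipschitz_on (ball x e) B"
    using locally_lipschitzE[OF assms] .
  have "continuous_on (ball x e) B"
    using L by (rule lipschitz_on_continuous_on)
  then show ?thesis
    using \<open>0 < e\<close> by (simp add: continuous_on_eq_continuous_at)
qed

lemma eventually_linesearch_condition:
  fixes B :: "'a::real_normed_vector \<Rightarrow> 'b::real_normed_vector"
  assumes lip: "locally_lipschitz B" and P: "P \<longlonglongrightarrow> p" and lam: "lam \<longlonglongrightarrow> 0"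
    and lam_nonneg: "\<And>i. 0 \<le> lam i" and "0 < c"
  shows "eventually (\<lambda>i. lam i * norm (B (P i) - B x) \<le> c * norm (P i - x)) sequentially"
proof (cases "p = x")
  case True
  obtain e L where "0 < e" and L: "L-lipschitz_on (ball x e) B"
    using locally_lipschitzE[OF lip] by blast
  have "eventually (\<lambda>i. P i \<in> ball x e) sequentially"
    using tendstoD[OF P \<open>0 < e\<close>] True by (simp add: dist_commute)
  moreover have "(\<lambda>i. lam i * L) \<longlonglongrightarrow> 0 * L"
    by (intro tendsto_intros lam)
  then have "eventually (\<lambda>i. lam i * L < c) sequentially"
    using \<open>0 < c\<close> by (intro order_tendstoD(2)) auto
  ultimately show ?thesis
  proof (rule eventually_elim2)
    fix i
    assume "P i \<in> ball x e" "lam i * L < c"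
    have "norm (B (P i) - B x) \<le> L * norm (P i - x)"
      using lipschitz_on_normD[OF L \<open>P i \<in> ball x e\<close>] \<open>0 < e\<close> by simp
    then have "lam i * norm (B (P i) - B x) \<le> (lam i * L) * norm (P i - x)"
      using lam_nonneg[of i] by (simp add: mult.assoc mult_left_mono)
    also have "\<dots> \<le> c * norm (P i - x)"
      using \<open>lam i * L < c\<close> by (intro mult_right_mono) auto
    finally show "lam i * norm (B (P i) - B x) \<le> c * norm (P i - x)" .
  qed
next
  case False
  have "(\<lambda>i. B (P i)) \<longlonglongrightarrow> B p"
    using isCont_tendsto_compose[OF locally_lipschitz_isCont[OF lip] P] .
  then have "(\<lambda>i. c * norm (P i - x) - lam i * norm (B (P i) - B x))
      \<longlonglongrightarrow> c * norm (p - x) - 0 * norm (B p - B x)"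
    by (intro tendsto_intros P lam)
  moreover have "0 < c * norm (p - x) - 0 * norm (B p - B x)"
    using False \<open>0 < c\<close> by simp
  ultimately have "eventually (\<lambda>i. 0 < c * norm (P i - x) - lam i * norm (B (P i) - B x)) sequentially"
    by (rule order_tendstoD(1))
  then show ?thesis
    by (rule eventually_mono) simp
qed

theorem lemma3p2:
  fixes A :: "'a::{real_inner, complete_space} \<Rightarrow> 'a set"
    and B :: "'a \<Rightarrow> 'a"
    and \<delta> \<sigma> \<rho> lam_prev :: real
    and xk xk_prev :: 'a
  assumes "maximally_monotone A"
    and "locally_lipschitz B"
    and "0 < \<delta>" "\<delta> < 1"
    and "0 < \<sigma>" "\<sigma> < 1"
    and "\<rho> \<in> {1, 1 / \<sigma>}"
    and "lam_prev > 0"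
  shows "\<exists>i::nat.
    (let lam = \<rho> * lam_prev * \<sigma> ^ i;
         xnext = resolvent lam A (xk - lam *\<^sub>R B xk - lam_prev *\<^sub>R (B xk - B xk_prev))
     in lam * norm (B xnext - B xk) \<le> (\<delta> / 2) * norm (xnext - xk))"
proof -
  define lam where "lam i = \<rho> * lam_prev * \<sigma> ^ i" for i
  define P where "P i = resolvent (lam i) A (xk - lam i *\<^sub>R B xk - lam_prev *\<^sub>R (B xk - B xk_prev))" for i
  have "0 < \<rho> * lam_prev"
    using assms(5,7,8) by auto
  then have lam_pos: "0 < lam i" for i
    using assms(5) by (simp add: lam_def)
  have "decseq lam"
    unfolding lam_def decseq_def using \<open>0 < \<rho> * lam_prev\<close> assms(5,6)
    by (auto intro!: mult_left_mono power_decreasing)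
  have "lam \<longlonglongrightarrow> 0"
    unfolding lam_def[abs_def] using assms(5,6) by (intro tendsto_mult_right_zero LIMSEQ_power_zero) simp
  have "P = (\<lambda>i. resolvent (lam i) A ((xk - lam_prev *\<^sub>R (B xk - B xk_prev)) - lam i *\<^sub>R B xk))"
    by (rule ext) (simp add: P_def diff_diff_eq add.commute)
  then obtain p where "P \<longlonglongrightarrow> p"
    using maximally_monotone_resolvent_path_convergent[OF assms(1) \<open>decseq lam\<close> lam_pos]
    unfolding convergent_def by auto
  have "eventually (\<lambda>i. lam i * norm (B (P i) - B xk) \<le> \<delta> / 2 * norm (P i - xk)) sequentially"
    using lam_pos assms(3)
    by (intro eventually_linesearch_condition[OF assms(2) \<open>P \<longlonglongrightarrow> p\<close> \<open>lam \<longlonglongrightarrow> 0\<close>])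
      (auto intro: less_imp_le)
  from eventually_happens'[OF sequentially_bot this] obtain i
    where "lam i * norm (B (P i) - B xk) \<le> \<delta> / 2 * norm (P i - xk)"
    by blast
  then show ?thesis
    unfolding Let_def lam_def P_def by (rule exI[of _ i])
qed

end
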